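(* Let $s\in(0,1)$. Consider the eigenvalue problem for $v$ on $[0,\pi]$: $$\Big(\partial_\varphi^2+\frac{(1-2s)(1+2s)}{4}\frac{1}{\sin(\varphi)^2}-\frac{(1-2s)^2}{4}\Big)v=\lambda v \ \text{ in }[0,\pi],\qquad \lim_{\sin(\varphi)\to0}\sin(\varphi)^{1-2s}\partial_\varphi\big(\sin(\varphi)^{\frac{2s-1}{2}}v\big)=0 \ \text{ at } \varphi\in\{0,\pi\}.$$ Then the eigenvalues $\lambda$ of this problem (i.e. the values of $\lambda$ for which a nontrivial solution exists) are exactly $$\lambda_k=-\frac{(1-2s)^2}{4}-\Big(k-s+\frac12\Big)^2,\qquad k\in\mathbb{N}_{\ge0}.$$ *)

theory Defs
  imports "HOL-Analysis.Analysis"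
begin

definition angular_op :: "real \<Rightarrow> (real \<Rightarrow> real) \<Rightarrow> real \<Rightarrow> real" where
  "angular_op s v phi =
     deriv (deriv v) phi + (1 - 2 * s) * (1 + 2 * s) / 4 * (1 / (sin phi)\<^sup>2) * v phi
     - (1 - 2 * s)\<^sup>2 / 4 * v phi"

definition bdry_quantity :: "real \<Rightarrow> (real \<Rightarrow> real) \<Rightarrow> real \<Rightarrow> real" where
  "bdry_quantity s v phi =
     sin phi powr (1 - 2 * s) * deriv (\<lambda>x. sin x powr ((2 * s - 1) / 2) * v x) phi"

definition is_eigenvalue :: "real \<Rightarrow> real \<Rightarrow> bool" where
  "is_eigenvalue s lam \<longleftrightarrow>
     (\<exists>v :: real \<Rightarrow> real.
        (\<forall>phi\<in>{0<..<pi}. v differentiable (at phi) \<and> deriv v differentiable (at phi)) \<and>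
        (\<forall>phi\<in>{0<..<pi}. angular_op s v phi = lam * v phi) \<and>
        ((bdry_quantity s v \<longlongrightarrow> 0) (at_right 0)) \<and>
        ((bdry_quantity s v \<longlongrightarrow> 0) (at_left pi)) \<and>
        (\<exists>phi\<in>{0<..<pi}. v phi \<noteq> 0))"

end

theory Submission
  imports Defs "HOL-Computational_Algebra.Polynomial"
begin

text \<open>Put \<open>a = (1 - 2s)/2\<close>, so that the operator is \<open>v'' + a (1 - a) v / sin\<^sup>2 - a\<^sup>2 v\<close> and the
  boundary quantity is \<open>sin^a (v' - a cot \<cdot> v)\<close>. For \<open>v = sin^a \<cdot> P(cos)\<close> the eigenvalue equation
  becomes the Gegenbauer equation for \<open>P\<close>; its polynomial solution of degree \<open>k\<close> yields an
  eigenfunction with eigenvalue \<open>-a\<^sup>2 - (k + a)\<^sup>2\<close>, whose boundary quantity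
  \<open>-sin^(2a + 1) \<cdot> P'(cos)\<close> vanishes at the endpoints since \<open>2a + 1 > 0\<close>.

  Conversely, let \<open>v\<close> be an eigenfunction whose eigenvalue is none of these. Integrating the boundary
  condition bounds \<open>sin^-a \<cdot> v\<close> by \<open>C + pi \<cdot> sin^-2a\<close> near the endpoints, so the Wronskian of \<open>v\<close>
  with each eigenfunction above tends to 0 there. By Green's identity \<open>sin^a \<cdot> v\<close> is orthogonal, as an
  improper integral, to every \<open>P(cos)\<close>, because the Gegenbauer polynomials span all polynomials.
  Approximating tent functions uniformly by such \<open>P(cos)\<close> then forces the bounded function
  \<open>sin^(a + 2) \<cdot> v\<close> to vanish.\<close>

section \<open>Gegenbauer polynomials\<close>

text \<open>Coefficients of a polynomial solution of degree \<open>k\<close> of the Gegenbauer equation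
  \<open>(1 - y\<^sup>2) P'' - (2a + 1) y P' + k (k + 2a) P = 0\<close>, a multiple of the Gegenbauer polynomial
  \<open>C\<^sub>k\<^sup>(\<^sup>a\<^sup>)\<close>. The factor \<open>real m - real k\<close> stops the recursion at index \<open>k\<close>.\<close>
fun gegenbauer_coeff :: "real \<Rightarrow> nat \<Rightarrow> nat \<Rightarrow> real" where
  "gegenbauer_coeff a k 0 = (if even k then 1 else 0)"
| "gegenbauer_coeff a k (Suc 0) = (if even k then 0 else 1)"
| "gegenbauer_coeff a k (Suc (Suc m)) =
     (real m - real k) * (real m + real k + 2 * a) / ((real m + 2) * (real m + 1)) * gegenbauer_coeff a k m"

lemma gegenbauer_coeff_odd_eq_0: "odd (m + k) \<Longrightarrow> gegenbauer_coeff a k m = 0"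
  by (induction a k m rule: gegenbauer_coeff.induct) auto

lemma gegenbauer_coeff_above_eq_0: "k < m \<Longrightarrow> gegenbauer_coeff a k m = 0"
proof (induction a k m rule: gegenbauer_coeff.induct)
  case (3 a k m)
  then consider "m = k" | "k < m" | "Suc m = k" by linarith
  then show ?case
    using 3 by cases (auto simp: gegenbauer_coeff_odd_eq_0)
qed auto

lemma gegenbauer_coeff_nonzero:
  "-1/2 < a \<Longrightarrow> m \<le> k \<Longrightarrow> even (k - m) \<Longrightarrow> gegenbauer_coeff a k m \<noteq> 0"
proof (induction a k m rule: gegenbauer_coeff.induct)
  case (2 a k)
  then show ?case by (cases k) auto
next
  case (3 a k m)
  then have "gegenbauer_coeff a k m \<noteq> 0" by (simp add: Suc_diff_le)
  with "3.prems" show ?case by simp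
qed simp

lemma gegenbauer_coeff_rec:
  "(real m + 2) * (real m + 1) * gegenbauer_coeff a k (Suc (Suc m))
     = (real m - real k) * (real m + real k + 2 * a) * gegenbauer_coeff a k m"
  by simp

declare gegenbauer_coeff.simps(3) [simp del]

definition gegenbauer :: "real \<Rightarrow> nat \<Rightarrow> real poly" where
  "gegenbauer a k = (\<Sum>i\<le>k. monom (gegenbauer_coeff a k i) i)"

lemma coeff_gegenbauer: "coeff (gegenbauer a k) i = gegenbauer_coeff a k i"
  by (auto simp: gegenbauer_def coeff_sum coeff_monom gegenbauer_coeff_above_eq_0)

lemma gegenbauer_nonzero: "-1/2 < a \<Longrightarrow> gegenbauer a k \<noteq> 0"
  using gegenbauer_coeff_nonzero[of a k k] coeff_gegenbauer[of a k k] by auto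

lemma degree_gegenbauer: "-1/2 < a \<Longrightarrow> degree (gegenbauer a k) = k"
  by (intro antisym degree_le le_degree)
     (simp_all add: coeff_gegenbauer gegenbauer_coeff_above_eq_0 gegenbauer_coeff_nonzero)

lemma gegenbauer_ode:
  "(1 - y\<^sup>2) * poly (pderiv (pderiv (gegenbauer a k))) y - (2 * a + 1) * y * poly (pderiv (gegenbauer a k)) y
     + real k * (real k + 2 * a) * poly (gegenbauer a k) y = 0"
proof -
  define P where "P = gegenbauer a k"
  define Q where "Q = pderiv (pderiv P) - monom 1 2 * pderiv (pderiv P)
     - smult (2 * a + 1) (monom 1 1 * pderiv P) + smult (real k * (real k + 2 * a)) P"
  have "coeff Q m = (real m + 2) * (real m + 1) * gegenbauer_coeff a k (Suc (Suc m))
     - (real m * (real m - 1) + (2 * a + 1) * real m - real k * (real k + 2 * a)) * gegenbauer_coeff a k m"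
    for m
  proof (cases m)
    case (Suc j)
    then show ?thesis
      by (cases j) (simp_all add: Q_def P_def coeff_pderiv coeff_monom_mult coeff_gegenbauer algebra_simps)
  qed (simp add: Q_def P_def coeff_pderiv coeff_monom_mult coeff_gegenbauer)
  then have "coeff Q m = 0" for m
    unfolding gegenbauer_coeff_rec by (simp add: algebra_simps)
  then have "Q = 0" by (simp add: poly_eq_iff)
  then have "poly Q y = 0" by simp
  then show ?thesis by (simp add: Q_def P_def poly_monom algebra_simps power2_eq_square)
qed

lemma poly_in_span_of_degree_basis:
  fixes P :: "nat \<Rightarrow> 'a::field poly"
  assumes deg: "\<And>k. degree (P k) = k" and nz: "\<And>k. P k \<noteq> 0"
  shows "degree p \<le> n \<Longrightarrow> \<exists>c. p = (\<Sum>k\<le>n. smult (c k) (P k))"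
proof (induction n arbitrary: p)
  case 0
  then have "p = smult (coeff p 0 / coeff (P 0) 0) (P 0)"
    using deg[of 0] nz[of 0] by (auto elim!: degree_eq_zeroE)
  then show ?case by auto
next
  case (Suc n)
  define d where "d = coeff p (Suc n) / lead_coeff (P (Suc n))"
  have "lead_coeff (P (Suc n)) \<noteq> 0" using nz by simp
  have "degree (p - smult d (P (Suc n))) \<le> n"
  proof (rule degree_le, intro allI impI)
    fix i assume "n < i"
    then consider "i = Suc n" | "Suc n < i" by linarith
    then show "coeff (p - smult d (P (Suc n))) i = 0"
      using Suc.prems deg[of "Suc n"] \<open>lead_coeff (P (Suc n)) \<noteq> 0\<close>
      by cases (auto simp: d_def coeff_eq_0)
  qed
  then obtain c where "p - smult d (P (Suc n)) = (\<Sum>k\<le>n. smult (c k) (P k))"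
    using Suc.IH by blast
  then have "p = (\<Sum>k\<le>Suc n. smult ((c(Suc n := d)) k) (P k))"
    by (simp add: algebra_simps)
  then show ?case by blast
qed

lemma powr_two_mult_add_one:
  fixes x :: real
  assumes "0 < x"
  shows "x powr (2 * a + 1) = x powr a * x powr a * x"
proof -
  have "2 * a + 1 = a + a + 1" by simp
  then have "x powr (2 * a + 1) = x powr a * x powr a * x powr 1"
    by (simp only: powr_add)
  then show ?thesis
    using assms by simp
qed

lemma DERIV_sin_powr:
  assumes "0 < sin x"
  shows "((\<lambda>x. sin x powr c) has_real_derivative sin x powr c * (c * cos x / sin x)) (at x)"
proof -
  have "((\<lambda>x. sin x powr c) has_real_derivative c * sin x powr (c - 1) * cos x) (at x)"
    by (rule DERIV_fun_powr[OF DERIV_sin assms, of c, simplified])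
  then show ?thesis
    using assms by (simp add: powr_diff field_simps)
qed

lemma DERIV_poly_cos:
  "((\<lambda>x. poly P (cos x)) has_real_derivative - sin x * poly (pderiv P) (cos x)) (at x)"
  using DERIV_chain2[OF poly_DERIV DERIV_cos, of P x] by (simp add: mult.commute)

definition sin_powr_poly_cos :: "real \<Rightarrow> real poly \<Rightarrow> real \<Rightarrow> real" where
  "sin_powr_poly_cos a P x = sin x powr a * poly P (cos x)"

definition sin_powr_poly_cos' :: "real \<Rightarrow> real poly \<Rightarrow> real \<Rightarrow> real" where
  "sin_powr_poly_cos' a P x =
     sin x powr a * (a * cos x / sin x * poly P (cos x) - sin x * poly (pderiv P) (cos x))"

definition sin_powr_poly_cos'' :: "real \<Rightarrow> real poly \<Rightarrow> real \<Rightarrow> real" where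
  "sin_powr_poly_cos'' a P x =
     sin x powr a * ((a\<^sup>2 * (cos x)\<^sup>2 - a) / (sin x)\<^sup>2 * poly P (cos x)
       - (2 * a + 1) * cos x * poly (pderiv P) (cos x) + (sin x)\<^sup>2 * poly (pderiv (pderiv P)) (cos x))"

lemma DERIV_sin_powr_poly_cos:
  "0 < sin x \<Longrightarrow> (sin_powr_poly_cos a P has_real_derivative sin_powr_poly_cos' a P x) (at x)"
  unfolding sin_powr_poly_cos_def[abs_def] sin_powr_poly_cos'_def
  by (rule DERIV_cong[OF DERIV_mult[OF DERIV_sin_powr DERIV_poly_cos]]) (simp_all add: algebra_simps)

lemma DERIV_sin_powr_poly_cos':
  assumes "0 < sin x"
  shows "(sin_powr_poly_cos' a P has_real_derivative sin_powr_poly_cos'' a P x) (at x)"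
proof -
  have "((\<lambda>x. a * cot x) has_real_derivative a * - inverse ((sin x)\<^sup>2)) (at x)"
    using assms by (intro DERIV_cmult DERIV_cot) simp
  then have "((\<lambda>x. a * cos x / sin x) has_real_derivative - a / (sin x)\<^sup>2) (at x)"
    by (simp add: cot_def field_simps)
  from DERIV_diff[OF DERIV_mult[OF this DERIV_poly_cos[of P]]
      DERIV_mult[OF DERIV_sin DERIV_poly_cos[of "pderiv P"]]]
  have "((\<lambda>x. a * cos x / sin x * poly P (cos x) - sin x * poly (pderiv P) (cos x)) has_real_derivative
      - a / (sin x)\<^sup>2 * poly P (cos x) - a * cos x * poly (pderiv P) (cos x)
      - cos x * poly (pderiv P) (cos x) + (sin x)\<^sup>2 * poly (pderiv (pderiv P)) (cos x)) (at x)"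
    by (rule DERIV_cong) (use assms in \<open>simp add: field_simps power2_eq_square\<close>)
  from DERIV_mult[OF DERIV_sin_powr[OF assms] this]
  show ?thesis
    unfolding sin_powr_poly_cos'_def[abs_def] sin_powr_poly_cos''_def
    by (rule DERIV_cong) (use assms in \<open>simp add: field_simps power2_eq_square\<close>)
qed

lemma sin_powr_poly_cos_ode:
  assumes "0 < sin x"
  shows "sin_powr_poly_cos'' a P x + a * (1 - a) * (1 / (sin x)\<^sup>2) * sin_powr_poly_cos a P x
           - a\<^sup>2 * sin_powr_poly_cos a P x
         = sin x powr a * ((sin x)\<^sup>2 * poly (pderiv (pderiv P)) (cos x)
             - (2 * a + 1) * cos x * poly (pderiv P) (cos x) - 2 * a\<^sup>2 * poly P (cos x))"
  using assms unfolding sin_powr_poly_cos_def sin_powr_poly_cos''_def cos_squared_eq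
  by (simp add: field_simps power2_eq_square)

definition gegenbauer_eigenvalue :: "real \<Rightarrow> nat \<Rightarrow> real" where
  "gegenbauer_eigenvalue a k = - a\<^sup>2 - (real k + a)\<^sup>2"

lemma gegenbauer_mode_ode:
  assumes "0 < sin x"
  shows "sin_powr_poly_cos'' a (gegenbauer a k) x
           + a * (1 - a) * (1 / (sin x)\<^sup>2) * sin_powr_poly_cos a (gegenbauer a k) x
           - a\<^sup>2 * sin_powr_poly_cos a (gegenbauer a k) x
         = gegenbauer_eigenvalue a k * sin_powr_poly_cos a (gegenbauer a k) x"
proof -
  let ?P = "gegenbauer a k" and ?c = "cos x"
  have "(sin x)\<^sup>2 * poly (pderiv (pderiv ?P)) ?c - (2 * a + 1) * ?c * poly (pderiv ?P) ?c
      - 2 * a\<^sup>2 * poly ?P ?c = gegenbauer_eigenvalue a k * poly ?P ?c"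
    using gegenbauer_ode[of ?c a k]
    unfolding gegenbauer_eigenvalue_def sin_squared_eq by (simp add: algebra_simps power2_eq_square)
  then show ?thesis
    unfolding sin_powr_poly_cos_ode[OF assms] by (simp add: sin_powr_poly_cos_def)
qed

text \<open>The limit \<open>sin x \<rightarrow> 0\<close> of the boundary condition, taken inside \<open>(0, pi)\<close>.\<close>
definition at_ends :: "real filter" where
  "at_ends = sup (at_right 0) (at_left pi)"

lemma tendsto_at_ends_iff:
  "(f \<longlongrightarrow> l) at_ends \<longleftrightarrow> (f \<longlongrightarrow> l) (at_right 0) \<and> (f \<longlongrightarrow> l) (at_left pi)"
  by (simp add: at_ends_def filterlim_def filtermap_sup)

lemma eventually_at_ends_in_interval: "\<forall>\<^sub>F x in at_ends. x \<in> {0<..<pi}"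
  unfolding at_ends_def eventually_sup
  using eventually_at_right_real[of 0 pi] eventually_at_left_real[of 0 pi] by simp

lemma filterlim_pi_minus_at_right_0: "filterlim (\<lambda>e. pi - e) (at_left pi) (at_right (0::real))"
  unfolding filterlim_at
proof
  show "\<forall>\<^sub>F e in at_right 0. pi - e \<in> {..<pi} \<and> pi - e \<noteq> pi"
    using eventually_at_right_less[of 0] by (auto elim!: eventually_mono)
  show "((\<lambda>e. pi - e) \<longlongrightarrow> pi) (at_right 0)"
    using tendsto_diff[OF tendsto_const[of pi] tendsto_ident_at[of 0 "{0<..}"]] by simp
qed

lemma sin_tendsto_0_at_ends: "(sin \<longlongrightarrow> 0) at_ends"
proof -
  have "((\<lambda>x. sin x) \<longlongrightarrow> sin 0) (at_right (0::real))"
    using tendsto_sin[OF tendsto_ident_at[of 0 "{0<..}"]] by simp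
  moreover have "((\<lambda>x. sin x) \<longlongrightarrow> sin pi) (at_left (pi::real))"
    by (intro tendsto_intros)
  ultimately show ?thesis
    by (simp add: tendsto_at_ends_iff)
qed

lemma sin_powr_tendsto_0_at_ends:
  assumes "0 < c"
  shows "((\<lambda>x. sin x powr c) \<longlongrightarrow> 0) at_ends"
proof (rule tendsto_zero_powrI[OF sin_tendsto_0_at_ends tendsto_const _ assms])
  show "\<forall>\<^sub>F x in at_ends. 0 \<le> sin x"
    using eventually_at_ends_in_interval by eventually_elim (simp add: sin_ge_zero)
qed

lemma tendsto_0_mult_poly_cos:
  fixes P :: "real poly"
  assumes "(f \<longlongrightarrow> 0) F"
  shows "((\<lambda>x. f x * poly P (cos x)) \<longlongrightarrow> 0) F"
proof -
  have "bounded (poly P ` {-1..1})"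
    by (intro compact_imp_bounded compact_continuous_image continuous_intros) simp
  then obtain B where B: "\<forall>y\<in>{-1..1}. \<bar>poly P y\<bar> \<le> B"
    unfolding bounded_real by auto
  show ?thesis
  proof (rule Lim_null_comparison)
    show "\<forall>\<^sub>F x in F. norm (f x * poly P (cos x)) \<le> \<bar>f x\<bar> * B"
      using B by (simp add: abs_mult mult_left_mono)
    show "((\<lambda>x. \<bar>f x\<bar> * B) \<longlongrightarrow> 0) F"
      using tendsto_mult_left_zero[OF tendsto_rabs_zero[OF assms]] .
  qed
qed

section \<open>Every \<open>gegenbauer_eigenvalue\<close> is an eigenvalue\<close>

lemma angular_op_eq:
  assumes "a = (1 - 2 * s) / 2"
  shows "angular_op s v x = deriv (deriv v) x + a * (1 - a) * (1 / (sin x)\<^sup>2) * v x - a\<^sup>2 * v x"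
proof -
  have "1 - 2 * s = 2 * a" "1 + 2 * s = 2 * (1 - a)"
    using assms by simp_all
  then have "(1 - 2 * s) * (1 + 2 * s) / 4 = a * (1 - a)" "(1 - 2 * s)\<^sup>2 / 4 = a\<^sup>2"
    by (simp_all add: power2_eq_square)
  then show ?thesis
    unfolding angular_op_def by simp
qed

lemma bdry_quantity_eq:
  assumes a: "a = (1 - 2 * s) / 2" and "0 < sin x" and "(v has_real_derivative v') (at x)"
  shows "bdry_quantity s v x = sin x powr a * (v' - a * cos x / sin x * v x)"
proof -
  have "((\<lambda>x. sin x powr (- a) * v x) has_real_derivative
      sin x powr (- a) * (v' - a * cos x / sin x * v x)) (at x)"
    using DERIV_mult[OF DERIV_sin_powr[OF assms(2), of "- a"] assms(3)]
    by (rule DERIV_cong) (simp add: algebra_simps)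
  moreover have "(2 * s - 1) / 2 = - a" "1 - 2 * s = a + a"
    using a by simp_all
  ultimately have "bdry_quantity s v x
      = sin x powr (a + a) * (sin x powr (- a) * (v' - a * cos x / sin x * v x))"
    unfolding bdry_quantity_def by (simp only: DERIV_imp_deriv)
  also have "\<dots> = (sin x powr (a + a) * sin x powr (- a)) * (v' - a * cos x / sin x * v x)"
    by (rule mult.assoc[symmetric])
  also have "sin x powr (a + a) * sin x powr (- a) = sin x powr a"
    by (simp add: powr_add[symmetric])
  finally show ?thesis .
qed

lemma poly_cos_nonzero:
  assumes "P \<noteq> 0"
  obtains x where "x \<in> {0<..<pi}" "poly P (cos x) \<noteq> 0"
proof -
  have "\<not> {-1<..<(1::real)} \<subseteq> {y. poly P y = 0}"
  proof
    assume "{-1<..<(1::real)} \<subseteq> {y. poly P y = 0}"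
    with poly_roots_finite[OF assms] have "finite {-1<..<(1::real)}"
      by (rule finite_subset[rotated])
    moreover have "- 1 < (1::real)" by simp
    ultimately show False using infinite_Ioo by blast
  qed
  then obtain y where "y \<in> {-1<..<1}" "poly P y \<noteq> 0" by blast
  with arccos_lt_bounded[of y] show ?thesis
    by (intro that[of "arccos y"]) auto
qed

lemma DERIV_deriv_sin_powr_poly_cos:
  assumes "x \<in> {0<..<pi}"
  shows "(deriv (sin_powr_poly_cos a P) has_real_derivative sin_powr_poly_cos'' a P x) (at x)"
proof (rule has_field_derivative_transform_within_open[OF _ open_greaterThanLessThan assms])
  show "(sin_powr_poly_cos' a P has_real_derivative sin_powr_poly_cos'' a P x) (at x)"
    using assms by (intro DERIV_sin_powr_poly_cos' sin_gt_zero) auto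
  show "sin_powr_poly_cos' a P y = deriv (sin_powr_poly_cos a P) y" if "y \<in> {0<..<pi}" for y
    using that by (intro DERIV_imp_deriv[symmetric] DERIV_sin_powr_poly_cos sin_gt_zero) auto
qed

lemma bdry_quantity_sin_powr_poly_cos:
  assumes a: "a = (1 - 2 * s) / 2" and "0 < sin x"
  shows "bdry_quantity s (sin_powr_poly_cos a P) x = - (sin x powr (2 * a + 1) * poly (pderiv P) (cos x))"
  unfolding bdry_quantity_eq[OF a \<open>0 < sin x\<close> DERIV_sin_powr_poly_cos[OF \<open>0 < sin x\<close>]]
    powr_two_mult_add_one[OF \<open>0 < sin x\<close>]
  using \<open>0 < sin x\<close> by (simp add: sin_powr_poly_cos_def sin_powr_poly_cos'_def field_simps)

lemma bdry_quantity_sin_powr_poly_cos_tendsto_0: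
  assumes "s < 1" and a: "a = (1 - 2 * s) / 2"
  shows "(bdry_quantity s (sin_powr_poly_cos a P) \<longlongrightarrow> 0) at_ends"
proof -
  have "((\<lambda>x. sin x powr (2 * a + 1) * poly (pderiv P) (cos x)) \<longlongrightarrow> 0) at_ends"
    using assms by (intro tendsto_0_mult_poly_cos sin_powr_tendsto_0_at_ends) simp
  then have "((\<lambda>x. - (sin x powr (2 * a + 1) * poly (pderiv P) (cos x))) \<longlongrightarrow> 0) at_ends"
    using tendsto_minus by fastforce
  moreover have "\<forall>\<^sub>F x in at_ends. - (sin x powr (2 * a + 1) * poly (pderiv P) (cos x))
      = bdry_quantity s (sin_powr_poly_cos a P) x"
    using eventually_at_ends_in_interval
    by eventually_elim (simp add: bdry_quantity_sin_powr_poly_cos[OF a] sin_gt_zero)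
  ultimately show ?thesis
    by (rule Lim_transform_eventually)
qed

lemma is_eigenvalue_gegenbauer_eigenvalue:
  assumes "s < 1" and a: "a = (1 - 2 * s) / 2"
  shows "is_eigenvalue s (gegenbauer_eigenvalue a k)"
  unfolding is_eigenvalue_def
proof (intro exI[of _ "sin_powr_poly_cos a (gegenbauer a k)"] conjI ballI)
  let ?G = "gegenbauer a k"
  let ?u = "sin_powr_poly_cos a ?G"
  fix x :: real assume x: "x \<in> {0<..<pi}"
  then have "0 < sin x" by (simp add: sin_gt_zero)
  show "?u differentiable at x"
    using DERIV_sin_powr_poly_cos[OF \<open>0 < sin x\<close>] real_differentiable_def by blast
  show "deriv ?u differentiable at x"
    using DERIV_deriv_sin_powr_poly_cos[OF x] real_differentiable_def by blast
  show "angular_op s ?u x = gegenbauer_eigenvalue a k * ?u x"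
    unfolding angular_op_eq[OF a] DERIV_imp_deriv[OF DERIV_deriv_sin_powr_poly_cos[OF x]]
    by (rule gegenbauer_mode_ode[OF \<open>0 < sin x\<close>])
next
  show "(bdry_quantity s (sin_powr_poly_cos a (gegenbauer a k)) \<longlongrightarrow> 0) (at_right 0)"
    "(bdry_quantity s (sin_powr_poly_cos a (gegenbauer a k)) \<longlongrightarrow> 0) (at_left pi)"
    using bdry_quantity_sin_powr_poly_cos_tendsto_0[OF assms] by (simp_all add: tendsto_at_ends_iff)
next
  have "gegenbauer a k \<noteq> 0"
    using assms by (intro gegenbauer_nonzero) simp
  then obtain x where "x \<in> {0<..<pi}" "poly (gegenbauer a k) (cos x) \<noteq> 0"
    by (rule poly_cos_nonzero)
  then show "\<exists>x\<in>{0<..<pi}. sin_powr_poly_cos a (gegenbauer a k) x \<noteq> 0"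
    using sin_gt_zero[of x] by (intro bexI[of _ x]) (auto simp: sin_powr_poly_cos_def)
qed

section \<open>Functions with vanishing moments against polynomials in \<open>cos\<close>\<close>

text \<open>Moments are taken over \<open>[e, pi - e]\<close> and then \<open>e \<rightarrow> 0+\<close>, as the eigenfunctions may be
  unbounded at the endpoints.\<close>
definition cos_moment :: "(real \<Rightarrow> real) \<Rightarrow> real poly \<Rightarrow> real \<Rightarrow> real" where
  "cos_moment h p e = integral {e..pi-e} (\<lambda>x. h x * poly p (cos x))"

lemma continuous_on_mult_poly_cos:
  assumes "continuous_on {0<..<pi} h" and "0 < e"
  shows "continuous_on {e..pi-e} (\<lambda>x. h x * poly p (cos x))"
  using assms by (intro continuous_intros continuous_on_subset[OF assms(1)]) auto

lemma cos_moment_sum: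
  assumes "continuous_on {0<..<pi} h" and "0 < e" and "finite K"
  shows "cos_moment h (\<Sum>k\<in>K. smult (c k) (P k)) e = (\<Sum>k\<in>K. c k * cos_moment h (P k) e)"
proof -
  have "(\<lambda>x. c k * (h x * poly (P k) (cos x))) integrable_on {e..pi-e}" for k
    by (intro integrable_continuous_interval continuous_intros continuous_on_mult_poly_cos[OF assms(1,2)])
  then show ?thesis
    unfolding cos_moment_def using assms(3)
    by (simp add: poly_sum sum_distrib_left mult_ac integral_sum)
qed

lemma poly_cos_approx:
  assumes "continuous_on {0..pi} f" and "0 < \<eta>"
  obtains p where "\<And>x. x \<in> {0..pi} \<Longrightarrow> \<bar>poly p (cos x) - f x\<bar> < \<eta>"
proof -
  have "continuous_on {-1..1} (\<lambda>y. f (arccos y))"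
    by (rule continuous_on_compose2[OF assms(1) continuous_on_arccos'])
       (auto simp: arccos_lbound arccos_ubound)
  then obtain g where g: "real_polynomial_function g" "\<And>y. y \<in> {-1..1} \<Longrightarrow> \<bar>f (arccos y) - g y\<bar> < \<eta>"
    using Stone_Weierstrass_real_polynomial_function[OF compact_Icc _ assms(2)] by blast
  obtain c n where "g = (\<lambda>y. \<Sum>i\<le>n. c i * y ^ i)"
    using g(1) real_polynomial_function_iff_sum by blast
  then have g_eq: "g = poly (\<Sum>i\<le>n. monom (c i) i)"
    by (simp add: fun_eq_iff poly_sum poly_monom)
  show ?thesis
  proof (rule that)
    fix x :: real assume "x \<in> {0..pi}"
    then have "\<bar>f (arccos (cos x)) - g (cos x)\<bar> < \<eta>"
      by (intro g(2)) auto
    with \<open>x \<in> {0..pi}\<close> show "\<bar>poly (\<Sum>i\<le>n. monom (c i) i) (cos x) - f x\<bar> < \<eta>"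
      by (simp add: g_eq arccos_cos abs_minus_commute)
  qed
qed

lemma integral_tent_lower_bound:
  fixes h :: "real \<Rightarrow> real"
  assumes "0 < \<delta>" and sub: "{x0 - \<delta>..x0 + \<delta>} \<subseteq> {c..d}" and cont: "continuous_on {c..d} h"
    and pos: "\<And>x. \<bar>x - x0\<bar> \<le> \<delta> \<Longrightarrow> H \<le> h x" and "0 \<le> H"
  shows "H * \<delta>\<^sup>2 / 2 \<le> integral {c..d} (\<lambda>x. h x * max 0 (\<delta> - \<bar>x - x0\<bar>))"
proof -
  let ?f = "\<lambda>x. h x * max 0 (\<delta> - \<bar>x - x0\<bar>)"
  let ?I = "{x0 - \<delta>/2..x0 + \<delta>/2}"
  have int: "?f integrable_on {c..d}"
    by (intro integrable_continuous_interval continuous_intros cont)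
  have "?I \<subseteq> {c..d}" using sub \<open>0 < \<delta>\<close> by auto
  have "integral ?I (\<lambda>x. H * (\<delta> / 2)) \<le> integral ?I ?f"
  proof (rule integral_le[OF integrable_const_ivl integrable_on_subinterval[OF int \<open>?I \<subseteq> {c..d}\<close>]])
    fix x assume "x \<in> ?I"
    then have "\<bar>x - x0\<bar> \<le> \<delta> / 2" by (auto split: abs_split)
    then have "H \<le> h x" "\<delta> / 2 \<le> max 0 (\<delta> - \<bar>x - x0\<bar>)"
      using pos[of x] \<open>0 < \<delta>\<close> by auto
    moreover have "0 \<le> h x" "0 \<le> \<delta> / 2"
      using \<open>0 \<le> H\<close> \<open>0 < \<delta>\<close> \<open>H \<le> h x\<close> by simp_all
    ultimately show "H * (\<delta> / 2) \<le> ?f x"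
      by (rule mult_mono)
  qed
  also have "\<dots> \<le> integral {c..d} ?f"
  proof (rule integral_subset_le[OF \<open>?I \<subseteq> {c..d}\<close> integrable_on_subinterval[OF int] int])
    show "\<forall>x\<in>{c..d}. 0 \<le> ?f x"
    proof
      fix x
      show "0 \<le> ?f x"
      proof (cases "\<bar>x - x0\<bar> \<le> \<delta>")
        case True
        then show ?thesis using pos[of x] \<open>0 \<le> H\<close> by simp
      next
        case False
        then show ?thesis by simp
      qed
    qed
  qed fact
  finally show ?thesis
    using \<open>0 < \<delta>\<close> by (simp add: power2_eq_square mult_ac)
qed

lemma integral_mult_approx_tent_lower_bound:
  fixes h g :: "real \<Rightarrow> real"
  assumes "0 < \<delta>" and sub: "{x0 - \<delta>..x0 + \<delta>} \<subseteq> {c..d}"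
    and cont: "continuous_on {c..d} h" "continuous_on {c..d} g"
    and bnd: "\<And>x. x \<in> {c..d} \<Longrightarrow> \<bar>h x\<bar> \<le> M"
    and approx: "\<And>x. x \<in> {c..d} \<Longrightarrow> \<bar>g x - max 0 (\<delta> - \<bar>x - x0\<bar>)\<bar> \<le> \<eta>"
    and pos: "\<And>x. \<bar>x - x0\<bar> \<le> \<delta> \<Longrightarrow> H \<le> h x" and "0 \<le> H"
  shows "H * \<delta>\<^sup>2 / 2 - M * \<eta> * (d - c) \<le> integral {c..d} (\<lambda>x. h x * g x)"
proof -
  let ?t = "\<lambda>x. max 0 (\<delta> - \<bar>x - x0\<bar>)"
  define A where "A = integral {c..d} (\<lambda>x. h x * ?t x)"
  define R where "R = integral {c..d} (\<lambda>x. h x * (g x - ?t x))"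
  have "integral {c..d} (\<lambda>x. h x * g x) = integral {c..d} (\<lambda>x. h x * ?t x + h x * (g x - ?t x))"
    by (simp add: right_diff_distrib)
  also have "\<dots> = A + R"
    unfolding A_def R_def by (intro integral_add integrable_continuous_interval continuous_intros cont)
  finally have "integral {c..d} (\<lambda>x. h x * g x) = A + R" .
  moreover have "H * \<delta>\<^sup>2 / 2 \<le> A"
    unfolding A_def by (rule integral_tent_lower_bound[OF \<open>0 < \<delta>\<close> sub cont(1) pos \<open>0 \<le> H\<close>])
  moreover have "norm R \<le> M * \<eta> * (d - c)"
    unfolding R_def
  proof (rule integral_bound)
    show "c \<le> d" using sub \<open>0 < \<delta>\<close> by auto
    show "continuous_on {c..d} (\<lambda>x. h x * (g x - ?t x))"
      by (intro continuous_intros cont)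
    fix x assume "x \<in> {c..d}"
    then show "norm (h x * (g x - ?t x)) \<le> M * \<eta>"
      using bnd approx by (simp add: abs_mult mult_mono')
  qed
  ultimately show ?thesis
    unfolding real_norm_def by linarith
qed

lemma cos_moment_lower_bound:
  assumes cont: "continuous_on {0<..<pi} h" and bnd: "\<And>x. x \<in> {0<..<pi} \<Longrightarrow> \<bar>h x\<bar> \<le> M"
    and x0: "x0 \<in> {0<..<pi}" "0 < h x0"
  obtains p c where "0 < c" "\<forall>\<^sub>F e in at_right 0. c \<le> cos_moment h p e"
proof -
  define H where "H = h x0 / 2"
  have "0 < H" "H \<le> M" using x0 bnd[of x0] by (auto simp: H_def)
  obtain d where d: "0 < d" "\<forall>x\<in>{0<..<pi}. dist x x0 < d \<longrightarrow> dist (h x) (h x0) < H"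
    using cont x0(1) \<open>0 < H\<close> unfolding continuous_on_iff by blast
  define \<delta> where "\<delta> = min d (min x0 (pi - x0)) / 2"
  have "0 < \<delta>" "\<delta> \<le> d / 2" "\<delta> \<le> x0 / 2" "\<delta> \<le> (pi - x0) / 2"
    using d x0 by (auto simp: \<delta>_def)
  then have \<delta>: "0 < \<delta>" "\<delta> < d" "0 < x0 - \<delta>" "x0 + \<delta> < pi"
    using d x0 by auto
  have pos: "H \<le> h x" if "\<bar>x - x0\<bar> \<le> \<delta>" for x
  proof -
    have "x \<in> {0<..<pi}" "dist x x0 < d"
      using that \<delta> by (auto simp: dist_real_def abs_le_iff)
    then have "\<bar>h x - h x0\<bar> < H"
      using d(2) by (simp add: dist_real_def)
    then show ?thesis
      unfolding H_def by arith
  qed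
  define \<eta> where "\<eta> = H * \<delta>\<^sup>2 / (4 * M * pi)"
  have "0 < \<eta>" using \<open>0 < H\<close> \<open>H \<le> M\<close> \<open>0 < \<delta>\<close> by (simp add: \<eta>_def)
  have "continuous_on {0..pi} (\<lambda>x. max 0 (\<delta> - \<bar>x - x0\<bar>))"
    by (intro continuous_intros)
  then obtain p where p: "\<And>x. x \<in> {0..pi} \<Longrightarrow> \<bar>poly p (cos x) - max 0 (\<delta> - \<bar>x - x0\<bar>)\<bar> < \<eta>"
    using \<open>0 < \<eta>\<close> poly_cos_approx by blast
  have "\<forall>\<^sub>F e in at_right 0. e \<in> {0<..<min (x0 - \<delta>) (pi - x0 - \<delta>)}"
    using \<delta> by (intro eventually_at_right_real) auto
  then have "\<forall>\<^sub>F e in at_right 0. H * \<delta>\<^sup>2 / 4 \<le> cos_moment h p e"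
  proof eventually_elim
    case (elim e)
    have sub: "{e..pi-e} \<subseteq> {0<..<pi}" "{x0 - \<delta>..x0 + \<delta>} \<subseteq> {e..pi-e}"
      using elim by auto
    have "H * \<delta>\<^sup>2 / 2 - M * \<eta> * (pi - e - e) \<le> cos_moment h p e"
      unfolding cos_moment_def
    proof (rule integral_mult_approx_tent_lower_bound[OF \<open>0 < \<delta>\<close> sub(2) _ _ _ _ pos])
      show "continuous_on {e..pi-e} h" "continuous_on {e..pi-e} (\<lambda>x. poly p (cos x))"
        by (intro continuous_intros continuous_on_subset[OF cont sub(1)])+
      fix x assume "x \<in> {e..pi-e}"
      with sub(1) show "\<bar>h x\<bar> \<le> M" "\<bar>poly p (cos x) - max 0 (\<delta> - \<bar>x - x0\<bar>)\<bar> \<le> \<eta>"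
        using bnd p[of x] by auto
    next
      show "0 \<le> H" using \<open>0 < H\<close> by simp
    qed
    moreover have "M * \<eta> * (pi - e - e) \<le> M * \<eta> * pi"
      using \<open>0 < \<eta>\<close> \<open>0 < H\<close> \<open>H \<le> M\<close> elim by (intro mult_left_mono) auto
    moreover have "M * \<eta> * pi = H * \<delta>\<^sup>2 / 4"
      using \<open>0 < H\<close> \<open>H \<le> M\<close> by (simp add: \<eta>_def)
    ultimately show ?case by linarith
  qed
  moreover have "0 < H * \<delta>\<^sup>2 / 4" using \<open>0 < H\<close> \<open>0 < \<delta>\<close> by simp
  ultimately show ?thesis by (intro that)
qed

lemma cos_moments_vanish_imp_eq_0:
  assumes cont: "continuous_on {0<..<pi} h" and bnd: "\<And>x. x \<in> {0<..<pi} \<Longrightarrow> \<bar>h x\<bar> \<le> M"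
    and moments: "\<And>p. (cos_moment h p \<longlongrightarrow> 0) (at_right 0)"
    and x: "x \<in> {0<..<pi}"
  shows "h x = 0"
proof -
  have False if "0 < g x" and g: "g = h \<or> g = (\<lambda>x. - h x)" for g
  proof -
    have "continuous_on {0<..<pi} g" "\<And>x. x \<in> {0<..<pi} \<Longrightarrow> \<bar>g x\<bar> \<le> M"
      using g cont bnd by (auto intro: continuous_intros)
    then obtain p c where "0 < c" "\<forall>\<^sub>F e in at_right 0. c \<le> cos_moment g p e"
      using cos_moment_lower_bound x \<open>0 < g x\<close> by metis
    moreover have "cos_moment (\<lambda>x. - h x) p = (\<lambda>e. - cos_moment h p e)"
      by (simp add: fun_eq_iff cos_moment_def)
    then have "(cos_moment g p \<longlongrightarrow> 0) (at_right 0)"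
      using g moments[of p] tendsto_minus[OF moments[of p]] by auto
    ultimately show False
      using tendsto_lowerbound[of "cos_moment g p" 0 "at_right 0" c] by simp
  qed
  then show ?thesis
    by (metis neg_0_less_iff_less not_less_iff_gr_or_eq)
qed

section \<open>Growth bounds near the endpoints\<close>

lemma sin_powr_le_sin_powr_add_1:
  assumes "0 < x" "x \<le> z" "z \<le> pi/2"
  shows "sin z powr c \<le> sin x powr c + 1"
proof -
  have "0 < sin x" "sin x \<le> sin z"
    using assms by (auto intro: sin_gt_zero simp: sin_mono_le_eq)
  show ?thesis
  proof (cases "c \<le> 0")
    case True
    then have "sin z powr c \<le> sin x powr c"
      using powr_mono2'[OF True \<open>0 < sin x\<close> \<open>sin x \<le> sin z\<close>] by simp
    then show ?thesis by simp
  next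
    case False
    then have "sin z powr c \<le> 1 powr c"
      using \<open>0 < sin x\<close> \<open>sin x \<le> sin z\<close> by (intro powr_mono2) auto
    then show ?thesis
      by (simp add: add_increasing)
  qed
qed

lemma bound_near_0_by_sin_powr:
  assumes b: "0 < b" "b \<le> pi/2"
    and deriv: "\<And>x. x \<in> {0<..b} \<Longrightarrow> (w has_real_derivative w' x) (at x)"
    and deriv_bound: "\<And>x. x \<in> {0<..b} \<Longrightarrow> \<bar>w' x\<bar> \<le> sin x powr c"
    and x: "x \<in> {0<..b}"
  shows "\<bar>w x\<bar> \<le> \<bar>w b\<bar> + pi * (sin x powr c + 1)"
proof (cases "x = b")
  case True
  then show ?thesis by (simp add: add_nonneg_nonneg)
next
  case False
  with x have "0 < x" "x < b" by auto
  then obtain z where z: "x < z" "z < b" "w b - w x = (b - x) * w' z"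
    using MVT2[of x b w w'] deriv by force
  have "\<bar>w' z\<bar> \<le> sin x powr c + 1"
    using deriv_bound[of z] sin_powr_le_sin_powr_add_1[of x z c] z \<open>0 < x\<close> b by auto
  then have "\<bar>(b - x) * w' z\<bar> \<le> pi * (sin x powr c + 1)"
    using \<open>0 < x\<close> \<open>x < b\<close> b by (auto simp: abs_mult intro!: mult_mono)
  then show ?thesis
    using z(3) by linarith
qed

lemma bound_near_pi_by_sin_powr:
  assumes b: "0 < b" "b \<le> pi/2"
    and deriv: "\<And>x. x \<in> {pi-b..<pi} \<Longrightarrow> (w has_real_derivative w' x) (at x)"
    and deriv_bound: "\<And>x. x \<in> {pi-b..<pi} \<Longrightarrow> \<bar>w' x\<bar> \<le> sin x powr c"
    and x: "x \<in> {pi-b..<pi}"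
  shows "\<bar>w x\<bar> \<le> \<bar>w (pi - b)\<bar> + pi * (sin x powr c + 1)"
proof -
  have "((\<lambda>y. w (pi - y)) has_real_derivative - w' (pi - y)) (at y)" if "y \<in> {0<..b}" for y
    using DERIV_chain2[OF deriv[of "pi - y"] DERIV_diff[OF DERIV_const DERIV_ident]] that
    by (simp add: algebra_simps)
  moreover have "\<bar>- w' (pi - y)\<bar> \<le> sin y powr c" if "y \<in> {0<..b}" for y
    using deriv_bound[of "pi - y"] that by auto
  ultimately have "\<bar>w (pi - (pi - x))\<bar> \<le> \<bar>w (pi - b)\<bar> + pi * (sin (pi - x) powr c + 1)"
    using x by (intro bound_near_0_by_sin_powr[OF b]) auto
  then show ?thesis by simp
qed

section \<open>Every eigenvalue is a \<open>gegenbauer_eigenvalue\<close>\<close>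

locale angular_eigenfunction =
  fixes s a lam :: real and v :: "real \<Rightarrow> real"
  assumes s_lt_1: "s < 1" and a_def: "a = (1 - 2 * s) / 2"
    and differentiable: "\<forall>x\<in>{0<..<pi}. v differentiable (at x) \<and> deriv v differentiable (at x)"
    and ode: "\<forall>x\<in>{0<..<pi}. angular_op s v x = lam * v x"
    and bdry_at_right: "(bdry_quantity s v \<longlongrightarrow> 0) (at_right 0)"
    and bdry_at_left: "(bdry_quantity s v \<longlongrightarrow> 0) (at_left pi)"
begin

lemma a_gt_neg_half: "- 1/2 < a"
  using s_lt_1 a_def by simp

lemma DERIV_v: "x \<in> {0<..<pi} \<Longrightarrow> (v has_real_derivative deriv v x) (at x)"
  using differentiable DERIV_deriv_iff_real_differentiable by blast

lemma DERIV_deriv_v: "x \<in> {0<..<pi} \<Longrightarrow> (deriv v has_real_derivative deriv (deriv v) x) (at x)"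
  using differentiable DERIV_deriv_iff_real_differentiable by blast

lemma continuous_on_v_mult_sin_powr: "continuous_on {0<..<pi} (\<lambda>x. v x * sin x powr c)"
proof -
  have "continuous_on {0<..<pi} v"
    by (rule continuous_at_imp_continuous_on) (use DERIV_v DERIV_isCont in blast)
  moreover have "sin x \<noteq> 0" if "x \<in> {0<..<pi}" for x
    using that sin_gt_zero[of x] by auto
  ultimately show ?thesis
    by (intro continuous_intros) auto
qed

lemma deriv2_v:
  "x \<in> {0<..<pi} \<Longrightarrow> deriv (deriv v) x = lam * v x - a * (1 - a) * (1 / (sin x)\<^sup>2) * v x + a\<^sup>2 * v x"
  using ode angular_op_eq[OF a_def, of v x] by simp

lemma bdry_quantity_tendsto_0: "(bdry_quantity s v \<longlongrightarrow> 0) at_ends"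
  using bdry_at_right bdry_at_left by (simp add: tendsto_at_ends_iff)

lemma DERIV_sin_powr_mult_v:
  assumes "x \<in> {0<..<pi}"
  shows "((\<lambda>x. sin x powr (- a) * v x) has_real_derivative bdry_quantity s v x * sin x powr (- 2 * a)) (at x)"
proof -
  have "0 < sin x" using assms by (simp add: sin_gt_zero)
  have p: "sin x powr a * sin x powr (- 2 * a) = sin x powr (- a)"
    by (simp add: powr_add[symmetric])
  show ?thesis
    using DERIV_mult[OF DERIV_sin_powr[OF \<open>0 < sin x\<close>, of "- a"] DERIV_v[OF assms]]
    unfolding bdry_quantity_eq[OF a_def \<open>0 < sin x\<close> DERIV_v[OF assms]]
    by (rule DERIV_cong) (simp add: algebra_simps flip: p)
qed

lemma bdry_quantity_lt_1_near_ends: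
  obtains b where "0 < b" "b \<le> pi/2" "\<forall>x \<in> {0<..b} \<union> {pi-b..<pi}. \<bar>bdry_quantity s v x\<bar> < 1"
proof -
  have "\<forall>\<^sub>F x in at_ends. \<bar>bdry_quantity s v x\<bar> < 1"
    using bdry_quantity_tendsto_0 unfolding tendsto_iff by (auto dest!: spec[of _ 1])
  then obtain b0 b1 where b0: "0 < b0" "\<And>x. 0 < x \<Longrightarrow> x < b0 \<Longrightarrow> \<bar>bdry_quantity s v x\<bar> < 1"
    and b1: "b1 < pi" "\<And>x. b1 < x \<Longrightarrow> x < pi \<Longrightarrow> \<bar>bdry_quantity s v x\<bar> < 1"
    unfolding at_ends_def eventually_sup eventually_at_right_field eventually_at_left_field by auto
  define b where "b = min (b0 / 2) (min ((pi - b1) / 2) (pi / 2))"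
  have "b \<le> b0 / 2"
    unfolding b_def by (rule min.cobounded1)
  moreover have "b \<le> (pi - b1) / 2"
    unfolding b_def by (intro min.coboundedI2 min.cobounded1)
  moreover have "b \<le> pi / 2"
    unfolding b_def by (intro min.coboundedI2 min.cobounded2)
  moreover have "0 < b"
    using b0 b1 unfolding b_def by simp
  ultimately show ?thesis
    using b0 b1 by (intro that) auto
qed

text \<open>Near the endpoints \<open>|bdry_quantity s v| < 1\<close>, so the derivative of \<open>sin x powr (- a) * v x\<close>
  is at most \<open>sin x powr (- 2 * a)\<close> there.\<close>
lemma sin_powr_mult_v_growth:
  obtains b C where "0 < b" "b \<le> pi/2" "0 \<le> C"
    "\<forall>x \<in> {0<..b} \<union> {pi-b..<pi}. \<bar>sin x powr (- a) * v x\<bar> \<le> C + pi * sin x powr (- 2 * a)"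
proof -
  obtain b where b: "0 < b" "b \<le> pi/2"
    and small: "\<forall>x \<in> {0<..b} \<union> {pi-b..<pi}. \<bar>bdry_quantity s v x\<bar> < 1"
    by (rule bdry_quantity_lt_1_near_ends)
  define w where "w x = sin x powr (- a) * v x" for x
  define w' where "w' x = bdry_quantity s v x * sin x powr (- 2 * a)" for x
  have w': "(w has_real_derivative w' x) (at x)" "\<bar>w' x\<bar> \<le> sin x powr (- 2 * a)"
    if "x \<in> {0<..b} \<union> {pi-b..<pi}" for x
  proof -
    show "(w has_real_derivative w' x) (at x)"
      using that b unfolding w_def[abs_def] w'_def by (intro DERIV_sin_powr_mult_v) auto
    have "\<bar>bdry_quantity s v x\<bar> \<le> 1"
      using bspec[OF small that] by simp
    then show "\<bar>w' x\<bar> \<le> sin x powr (- 2 * a)"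
      by (simp add: w'_def abs_mult mult_left_le_one_le)
  qed
  have w_bound: "\<bar>w x\<bar> \<le> \<bar>w b\<bar> + \<bar>w (pi - b)\<bar> + pi + pi * sin x powr (- 2 * a)"
    if "x \<in> {0<..b} \<union> {pi-b..<pi}" for x
    using that
  proof
    assume "x \<in> {0<..b}"
    then have "\<bar>w x\<bar> \<le> \<bar>w b\<bar> + pi * (sin x powr (- 2 * a) + 1)"
      using w' by (intro bound_near_0_by_sin_powr[OF b]) auto
    then show ?thesis by (simp add: algebra_simps)
  next
    assume "x \<in> {pi-b..<pi}"
    then have "\<bar>w x\<bar> \<le> \<bar>w (pi - b)\<bar> + pi * (sin x powr (- 2 * a) + 1)"
      using w' by (intro bound_near_pi_by_sin_powr[OF b]) auto
    then show ?thesis by (simp add: algebra_simps)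
  qed
  show ?thesis
    by (rule that[OF b(1,2), of "\<bar>w b\<bar> + \<bar>w (pi - b)\<bar> + pi"]) (use w_bound in \<open>auto simp: w_def\<close>)
qed

lemma sin_powr_mult_sin_mult_v_bound:
  assumes x: "x \<in> {0<..<pi}"
    and w: "\<bar>sin x powr (- a) * v x\<bar> \<le> C + pi * sin x powr (- 2 * a)"
  shows "\<bar>sin x powr a * sin x * v x\<bar> \<le> C * sin x powr (2 * a + 1) + pi * sin x"
proof -
  define S where "S = sin x"
  define W where "W = S powr (- a) * v x"
  have "0 < S" using x by (simp add: S_def sin_gt_zero)
  have "v x = S powr a * W"
    using \<open>0 < S\<close> by (simp add: W_def powr_minus field_simps)
  then have "\<bar>S powr a * S * v x\<bar> = S powr (2 * a + 1) * \<bar>W\<bar>"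
    using \<open>0 < S\<close> unfolding powr_two_mult_add_one[OF \<open>0 < S\<close>] by (simp add: abs_mult mult_ac)
  also have "\<dots> \<le> S powr (2 * a + 1) * (C + pi * S powr (- 2 * a))"
    using w by (intro mult_left_mono) (simp_all add: W_def S_def)
  also have "\<dots> = C * S powr (2 * a + 1) + pi * S"
    using \<open>0 < S\<close> by (simp add: distrib_left mult.left_commute[of _ pi] powr_add[symmetric])
  finally show ?thesis
    by (simp add: S_def)
qed

lemma v_mult_sin_powr_mult_sin_sq_bound:
  assumes x: "x \<in> {0<..<pi}" and "0 \<le> C"
    and w: "\<bar>sin x powr (- a) * v x\<bar> \<le> C + pi * sin x powr (- 2 * a)"
  shows "\<bar>v x * sin x powr a * (sin x)\<^sup>2\<bar> \<le> C + pi"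
proof -
  have "0 < sin x" "sin x \<le> 1" using x by (simp_all add: sin_gt_zero)
  have "sin x powr (2 * a + 1) \<le> 1 powr (2 * a + 1)"
    using a_gt_neg_half \<open>0 < sin x\<close> \<open>sin x \<le> 1\<close> by (intro powr_mono2) auto
  then have "C * sin x powr (2 * a + 1) + pi * sin x \<le> C * 1 + pi * 1"
    using \<open>0 \<le> C\<close> \<open>sin x \<le> 1\<close> by (intro add_mono mult_left_mono) auto
  then have "\<bar>sin x powr a * sin x * v x\<bar> \<le> C + pi"
    using sin_powr_mult_sin_mult_v_bound[OF x w] by simp
  then have "sin x * \<bar>sin x powr a * sin x * v x\<bar> \<le> 1 * (C + pi)"
    using \<open>0 < sin x\<close> \<open>sin x \<le> 1\<close> by (intro mult_mono) auto
  moreover have "\<bar>v x * sin x powr a * (sin x)\<^sup>2\<bar> = sin x * \<bar>sin x powr a * sin x * v x\<bar>"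
    using \<open>0 < sin x\<close> by (simp add: abs_mult power2_eq_square mult_ac)
  ultimately show ?thesis by simp
qed

lemma sin_powr_mult_sin_mult_v_tendsto_0: "((\<lambda>x. sin x powr a * sin x * v x) \<longlongrightarrow> 0) at_ends"
proof -
  obtain b C where b: "0 < b" "b \<le> pi/2" "0 \<le> C"
    and growth: "\<forall>x \<in> {0<..b} \<union> {pi-b..<pi}.
      \<bar>sin x powr (- a) * v x\<bar> \<le> C + pi * sin x powr (- 2 * a)"
    by (rule sin_powr_mult_v_growth)
  have "\<forall>\<^sub>F x in at_ends. x \<in> {0<..b} \<union> {pi-b..<pi}"
    unfolding at_ends_def eventually_sup
    using eventually_at_right_real[of 0 b] eventually_at_left_real[of "pi - b" pi] b
    by (auto elim!: eventually_mono)
  then have "\<forall>\<^sub>F x in at_ends. norm (sin x powr a * sin x * v x) \<le> C * sin x powr (2 * a + 1) + pi * sin x"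
  proof eventually_elim
    case (elim x)
    with b have "x \<in> {0<..<pi}" by auto
    with elim growth show ?case
      using sin_powr_mult_sin_mult_v_bound by simp
  qed
  moreover have "((\<lambda>x. sin x powr (2 * a + 1)) \<longlongrightarrow> 0) at_ends"
    using a_gt_neg_half by (intro sin_powr_tendsto_0_at_ends) simp
  then have "((\<lambda>x. C * sin x powr (2 * a + 1) + pi * sin x) \<longlongrightarrow> 0) at_ends"
    by (intro tendsto_add_zero tendsto_mult_right_zero sin_tendsto_0_at_ends)
  ultimately show ?thesis
    by (rule Lim_null_comparison)
qed

lemma bounded_v_mult_sin_powr_mult_sin_sq:
  obtains M where "\<And>x. x \<in> {0<..<pi} \<Longrightarrow> \<bar>v x * sin x powr a * (sin x)\<^sup>2\<bar> \<le> M"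
proof -
  obtain b C where b: "0 < b" "b \<le> pi/2" "0 \<le> C"
    and growth: "\<forall>x \<in> {0<..b} \<union> {pi-b..<pi}.
      \<bar>sin x powr (- a) * v x\<bar> \<le> C + pi * sin x powr (- 2 * a)"
    by (rule sin_powr_mult_v_growth)
  have "continuous_on {b..pi-b} (\<lambda>x. v x * sin x powr a * (sin x)\<^sup>2)"
    using b by (intro continuous_intros continuous_on_subset[OF continuous_on_v_mult_sin_powr]) auto
  then have "bounded ((\<lambda>x. v x * sin x powr a * (sin x)\<^sup>2) ` {b..pi-b})"
    by (intro compact_imp_bounded compact_continuous_image[OF _ compact_Icc])
  then obtain M where M: "\<forall>x\<in>{b..pi-b}. \<bar>v x * sin x powr a * (sin x)\<^sup>2\<bar> \<le> M"
    unfolding bounded_real by auto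
  show ?thesis
  proof (rule that[of "max M (C + pi)"])
    fix x assume x: "x \<in> {0<..<pi}"
    show "\<bar>v x * sin x powr a * (sin x)\<^sup>2\<bar> \<le> max M (C + pi)"
    proof (cases "x \<in> {b..pi-b}")
      case True
      then show ?thesis using M by fastforce
    next
      case False
      then have "x \<in> {0<..b} \<union> {pi-b..<pi}" using x by auto
      then show ?thesis
        using v_mult_sin_powr_mult_sin_sq_bound[OF x b(3)] growth by fastforce
    qed
  qed
qed

definition wronskian :: "nat \<Rightarrow> real \<Rightarrow> real" where
  "wronskian k x = deriv v x * sin_powr_poly_cos a (gegenbauer a k) x
     - v x * sin_powr_poly_cos' a (gegenbauer a k) x"

lemma DERIV_wronskian:
  assumes x: "x \<in> {0<..<pi}"
  shows "(wronskian k has_real_derivative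
           (lam - gegenbauer_eigenvalue a k) * (v x * sin_powr_poly_cos a (gegenbauer a k) x)) (at x)"
proof -
  let ?G = "gegenbauer a k"
  have "0 < sin x" using x by (simp add: sin_gt_zero)
  have eq: "sin_powr_poly_cos'' a ?G x = gegenbauer_eigenvalue a k * sin_powr_poly_cos a ?G x
      - a * (1 - a) * (1 / (sin x)\<^sup>2) * sin_powr_poly_cos a ?G x + a\<^sup>2 * sin_powr_poly_cos a ?G x"
    using gegenbauer_mode_ode[OF \<open>0 < sin x\<close>, of a k] by linarith
  have "(wronskian k has_real_derivative
      deriv (deriv v) x * sin_powr_poly_cos a ?G x + sin_powr_poly_cos' a ?G x * deriv v x
      - (deriv v x * sin_powr_poly_cos' a ?G x + sin_powr_poly_cos'' a ?G x * v x)) (at x)"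
    unfolding wronskian_def[abs_def]
    by (intro DERIV_diff DERIV_mult DERIV_deriv_v DERIV_v DERIV_sin_powr_poly_cos
        DERIV_sin_powr_poly_cos' x \<open>0 < sin x\<close>)
  then show ?thesis
    by (rule DERIV_cong) (simp add: eq deriv2_v[OF x] algebra_simps)
qed

lemma wronskian_eq:
  assumes x: "x \<in> {0<..<pi}"
  shows "wronskian k x = bdry_quantity s v x * poly (gegenbauer a k) (cos x)
           + sin x powr a * sin x * v x * poly (pderiv (gegenbauer a k)) (cos x)"
proof -
  have "0 < sin x" using x by (simp add: sin_gt_zero)
  then show ?thesis
    unfolding wronskian_def bdry_quantity_eq[OF a_def \<open>0 < sin x\<close> DERIV_v[OF x]]
    by (simp add: sin_powr_poly_cos_def sin_powr_poly_cos'_def field_simps)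
qed

lemma wronskian_tendsto_0: "(wronskian k \<longlongrightarrow> 0) at_ends"
proof -
  have "((\<lambda>x. bdry_quantity s v x * poly (gegenbauer a k) (cos x)
      + sin x powr a * sin x * v x * poly (pderiv (gegenbauer a k)) (cos x)) \<longlongrightarrow> 0 + 0) at_ends"
    by (intro tendsto_add tendsto_0_mult_poly_cos bdry_quantity_tendsto_0 sin_powr_mult_sin_mult_v_tendsto_0)
  then show ?thesis
    using eventually_at_ends_in_interval
    by (auto intro: Lim_transform_eventually elim!: eventually_mono simp: wronskian_eq)
qed

text \<open>Green's identity: the moments of \<open>v\<close> against the eigenfunctions are boundary terms of the
  Wronskian.\<close>
lemma gegenbauer_moment_eq_wronskian:
  assumes "e \<in> {0<..<pi/2}"
  shows "(lam - gegenbauer_eigenvalue a k) * cos_moment (\<lambda>x. v x * sin x powr a) (gegenbauer a k) e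
      = wronskian k (pi - e) - wronskian k e"
proof -
  have "((\<lambda>x. (lam - gegenbauer_eigenvalue a k) * (v x * sin_powr_poly_cos a (gegenbauer a k) x))
      has_integral wronskian k (pi - e) - wronskian k e) {e..pi-e}"
  proof (rule fundamental_theorem_of_calculus)
    show "e \<le> pi - e" using assms by simp
    fix x assume "x \<in> {e..pi-e}"
    then have "x \<in> {0<..<pi}" using assms by auto
    then show "(wronskian k has_vector_derivative
        (lam - gegenbauer_eigenvalue a k) * (v x * sin_powr_poly_cos a (gegenbauer a k) x))
        (at x within {e..pi-e})"
      unfolding has_real_derivative_iff_has_vector_derivative[symmetric]
      by (rule has_field_derivative_at_within[OF DERIV_wronskian])
  qed
  then show ?thesis
    unfolding cos_moment_def sin_powr_poly_cos_def
    by (simp add: mult.assoc integral_unique flip: integral_mult_right)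
qed

lemma gegenbauer_moment_tendsto_0:
  assumes "lam \<noteq> gegenbauer_eigenvalue a k"
  shows "(cos_moment (\<lambda>x. v x * sin x powr a) (gegenbauer a k) \<longlongrightarrow> 0) (at_right 0)"
proof -
  define c where "c = lam - gegenbauer_eigenvalue a k"
  have "c \<noteq> 0" using assms by (simp add: c_def)
  have "((\<lambda>e. wronskian k (pi - e)) \<longlongrightarrow> 0) (at_right 0)" "(wronskian k \<longlongrightarrow> 0) (at_right 0)"
    using wronskian_tendsto_0[of k]
    by (auto simp: tendsto_at_ends_iff intro: filterlim_compose[OF _ filterlim_pi_minus_at_right_0])
  then have "((\<lambda>e. (wronskian k (pi - e) - wronskian k e) / c) \<longlongrightarrow> (0 - 0) / c) (at_right 0)"
    by (intro tendsto_divide tendsto_diff) (use \<open>c \<noteq> 0\<close> in auto)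
  moreover have "\<forall>\<^sub>F e in at_right 0. e \<in> {0<..<pi/2}"
    by (rule eventually_at_right_real) simp
  ultimately show ?thesis
    using gegenbauer_moment_eq_wronskian \<open>c \<noteq> 0\<close> unfolding c_def
    by (auto intro: Lim_transform_eventually elim!: eventually_mono simp: field_simps)
qed

lemma poly_moment_tendsto_0:
  assumes "\<forall>k. lam \<noteq> gegenbauer_eigenvalue a k"
  shows "(cos_moment (\<lambda>x. v x * sin x powr a) p \<longlongrightarrow> 0) (at_right 0)"
proof -
  obtain c where p: "p = (\<Sum>k\<le>degree p. smult (c k) (gegenbauer a k))"
    using poly_in_span_of_degree_basis[of "gegenbauer a" p "degree p"]
      degree_gegenbauer[OF a_gt_neg_half] gegenbauer_nonzero[OF a_gt_neg_half] by blast
  have "((\<lambda>e. \<Sum>k\<le>degree p. c k * cos_moment (\<lambda>x. v x * sin x powr a) (gegenbauer a k) e)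
      \<longlongrightarrow> 0) (at_right 0)"
    using assms by (intro tendsto_null_sum tendsto_mult_right_zero gegenbauer_moment_tendsto_0) auto
  moreover have "\<forall>\<^sub>F e in at_right 0. (\<Sum>k\<le>degree p. c k * cos_moment (\<lambda>x. v x * sin x powr a) (gegenbauer a k) e)
      = cos_moment (\<lambda>x. v x * sin x powr a) p e"
    using eventually_at_right_less[of 0]
    by eventually_elim (subst p, simp add: cos_moment_sum continuous_on_v_mult_sin_powr)
  ultimately show ?thesis
    by (rule Lim_transform_eventually)
qed

lemma gegenbauer_eigenvalue_if_nontrivial:
  assumes "\<exists>x\<in>{0<..<pi}. v x \<noteq> 0"
  shows "\<exists>k. lam = gegenbauer_eigenvalue a k"
proof (rule ccontr)
  assume "\<nexists>k. lam = gegenbauer_eigenvalue a k"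
  then have no_eigenvalue: "\<forall>k. lam \<noteq> gegenbauer_eigenvalue a k" by blast
  define h where "h x = v x * sin x powr a * (sin x)\<^sup>2" for x
  obtain M where M: "\<And>x. x \<in> {0<..<pi} \<Longrightarrow> \<bar>h x\<bar> \<le> M"
    using bounded_v_mult_sin_powr_mult_sin_sq unfolding h_def by blast
  have "continuous_on {0<..<pi} h"
    unfolding h_def by (intro continuous_intros continuous_on_v_mult_sin_powr)
  moreover have "(cos_moment h p \<longlongrightarrow> 0) (at_right 0)" for p
  proof -
    have "h x * poly p (cos x) = v x * sin x powr a * poly ([:1, 0, -1:] * p) (cos x)" for x
      unfolding h_def sin_squared_eq by (simp add: algebra_simps power2_eq_square)
    then have "cos_moment h p = cos_moment (\<lambda>x. v x * sin x powr a) ([:1, 0, -1:] * p)"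
      by (simp add: fun_eq_iff cos_moment_def)
    then show ?thesis
      using poly_moment_tendsto_0[OF no_eigenvalue] by simp
  qed
  ultimately have h_eq_0: "h x = 0" if "x \<in> {0<..<pi}" for x
    using cos_moments_vanish_imp_eq_0 M that by blast
  obtain x where x: "x \<in> {0<..<pi}" "v x \<noteq> 0"
    using assms by blast
  then show False
    using h_eq_0[OF x(1)] sin_gt_zero[of x] by (simp add: h_def)
qed

end

lemma is_eigenvalue_imp_gegenbauer_eigenvalue:
  assumes "s < 1" and "is_eigenvalue s lam"
  shows "\<exists>k. lam = gegenbauer_eigenvalue ((1 - 2 * s) / 2) k"
proof -
  obtain v where
    "\<forall>x\<in>{0<..<pi}. v differentiable (at x) \<and> deriv v differentiable (at x)"
    "\<forall>x\<in>{0<..<pi}. angular_op s v x = lam * v x"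
    "(bdry_quantity s v \<longlongrightarrow> 0) (at_right 0)" "(bdry_quantity s v \<longlongrightarrow> 0) (at_left pi)"
    and nontrivial: "\<exists>x\<in>{0<..<pi}. v x \<noteq> 0"
    using assms(2) unfolding is_eigenvalue_def by blast
  with assms(1) interpret angular_eigenfunction s "(1 - 2 * s) / 2" lam v
    by unfold_locales auto
  show ?thesis
    by (rule gegenbauer_eigenvalue_if_nontrivial[OF nontrivial])
qed

lemma gegenbauer_eigenvalue_eq:
  "gegenbauer_eigenvalue ((1 - 2 * s) / 2) k = - (1 - 2 * s)\<^sup>2 / 4 - (real k - s + 1/2)\<^sup>2"
  by (simp add: gegenbauer_eigenvalue_def power2_eq_square field_simps)

theorem mainTheorem8:
  fixes s :: real
  assumes "0 < s" and "s < 1"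
  shows "{lam. is_eigenvalue s lam} =
         {- (1 - 2 * s)\<^sup>2 / 4 - (real (k::nat) - s + 1/2)\<^sup>2 | k. True}"
proof -
  have "is_eigenvalue s lam \<longleftrightarrow> (\<exists>k. lam = gegenbauer_eigenvalue ((1 - 2 * s) / 2) k)" for lam
    using is_eigenvalue_imp_gegenbauer_eigenvalue is_eigenvalue_gegenbauer_eigenvalue \<open>s < 1\<close>
    by blast
  then show ?thesis
    by (auto simp: gegenbauer_eigenvalue_eq)
qed

end
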